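(* Assume the standing assumptions below, let $\gamma\in[0,\gamma_* )$, and let $U(\cdot;\gamma)$ be the finite wavefront with speed $c(\gamma)$ normalized so that its support is $(-\infty,0]$. Let $V(\xi;\gamma):=\frac{m}{m-\alpha}U(\xi;\gamma)^{m-\alpha}$. Then $$\lim_{\xi\to0^-}V'(\xi;\gamma)=-c(\gamma)^\alpha,\qquad \lim_{\xi\to0^-}V''(\xi;\gamma)=\frac{(\gamma c(\gamma)-h'(0))(m-\alpha)}{(p-1)(m-\alpha+1)c(\gamma)^{1-\alpha}},$$ $$\lim_{\xi\to0^-}\big(|V'|^{p-2}V'\big)'(\xi;\gamma)=\frac{(\gamma c(\gamma)-h'(0))(m-\alpha)}{m-\alpha+1}.$$
   Context: Standing assumptions: $m>0$, $p>1$ with $m(p-1)>1$; $\alpha:=1/(p-1)$. $h\in C^1([0,\infty))$ satisfies $h(0)=0$, and for some $a\in[0,1)$: $h\le0$ on $[0,a]$, $h>0$ on $(a,1)$, $h<0$ on $(1,\infty)$, $h'(1)<0$; if $a>0$ also $\int_0^1h(u)u^{m-1}du>0$. For $\gamma\in[0,\gamma_* )$ ($\gamma_*>0$ small), $c(\gamma)>0$ denotes the unique speed for which the one-dimensional equation $u_t=(|(u^m)_r|^{p-2}(u^m)_r)_r+\gamma|(u^m)_r|^{p-2}(u^m)_r+h(u)$ has a finite wavefront, i.e. a travelling wave $U(r-ct)$ with $U$ continuous, nonincreasing, $U(-\infty)=1$, $U=0$ on some $[\xi_0,\infty)$ and $U>0$ on $(-\infty,\xi_0)$; it is unique up to translation,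 and smooth where positive. *)

theory Defs
  imports "HOL-Analysis.Analysis"
begin

definition alpha :: "real \<Rightarrow> real" where
  "alpha p = 1 / (p - 1)"

definition flux :: "real \<Rightarrow> real \<Rightarrow> (real \<Rightarrow> real) \<Rightarrow> real \<Rightarrow> real" where
  "flux m p U \<xi> = \<bar>deriv (\<lambda>s. U s powr m) \<xi>\<bar> powr (p - 2) * deriv (\<lambda>s. U s powr m) \<xi>"

definition test_fun :: "(real \<Rightarrow> real) \<Rightarrow> bool" where
  "test_fun \<phi> \<longleftrightarrow> (\<forall>\<xi>. \<phi> differentiable at \<xi>) \<and> continuous_on UNIV (deriv \<phi>)
     \<and> (\<exists>R. \<forall>\<xi>. \<bar>\<xi>\<bar> > R \<longrightarrow> \<phi> \<xi> = 0)"

text \<open>U is a travelling wave profile with speed c of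
  u_t = (|(u^m)_r|^(p-2)(u^m)_r)_r + gamma |(u^m)_r|^(p-2)(u^m)_r + h(u),
  i.e. u(r,t) = U(r - c t) is a (weak) solution:
  -c U' = Phi' + gamma Phi + h(U) with Phi = flux, in the sense of distributions,
  with U^m of class C^1.\<close>
definition tw_solution ::
  "real \<Rightarrow> real \<Rightarrow> (real \<Rightarrow> real) \<Rightarrow> real \<Rightarrow> real \<Rightarrow> (real \<Rightarrow> real) \<Rightarrow> bool" where
  "tw_solution m p h \<gamma> c U \<longleftrightarrow>
     (\<forall>\<xi>. (\<lambda>s. U s powr m) differentiable at \<xi>)
     \<and> continuous_on UNIV (deriv (\<lambda>s. U s powr m))
     \<and> (\<forall>\<phi>. test_fun \<phi> \<longrightarrow>
          ((\<lambda>\<xi>. (c * U \<xi> + flux m p U \<xi>) * deriv \<phi> \<xi>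
                 - (\<gamma> * flux m p U \<xi> + h (U \<xi>)) * \<phi> \<xi>) has_integral 0) UNIV)"

definition finite_wavefront ::
  "real \<Rightarrow> real \<Rightarrow> (real \<Rightarrow> real) \<Rightarrow> real \<Rightarrow> real \<Rightarrow> (real \<Rightarrow> real) \<Rightarrow> bool" where
  "finite_wavefront m p h \<gamma> c U \<longleftrightarrow>
     tw_solution m p h \<gamma> c U
     \<and> continuous_on UNIV U \<and> antimono U \<and> (U \<longlongrightarrow> 1) at_bot
     \<and> (\<exists>\<xi>0. (\<forall>\<xi>\<ge>\<xi>0. U \<xi> = 0) \<and> (\<forall>\<xi><\<xi>0. U \<xi> > 0))"

end

(*
  Write w = U^m, Phi = -(-w')^(p-1) for the flux, P = c U + Phi and g = gamma Phi + h(U).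
  Testing the weak travelling-wave equation against C^1 cutoffs approximating the indicator
  of [a, b] gives P(a) - P(b) = integral of g over [a, b], so P(xi) is the integral of g
  over [xi, 0]. Near the front |g| <= C (U + |P|), and absorbing the |P| term yields
  |P(xi)| = O(|xi| U(xi)); hence q = Phi/U tends to -c. Since V' = -(-q)^alpha and
  |V'|^(p-2) V' = q, this is the first limit. Differentiating q = P/U - c gives
  q' = -g/U - (P/U^(beta+1)) V'/m with beta = m - alpha; here -g/U tends to gamma c - h'(0),
  and l'Hopital's rule applied to P/U^(beta+1) identifies the limit of q'. The chain rule
  then gives the limit of V''.
*)

theory Submission
  imports Defs
begin

definition bump :: "real \<Rightarrow> real \<Rightarrow> real \<Rightarrow> real" where
  "bump c d x = 3 / (4 * d^3) * max 0 (d^2 - (x - c)^2)"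

lemma continuous_on_bump: "continuous_on S (bump c d)"
  unfolding bump_def by (intro continuous_intros)

lemma bump_nonneg: "d > 0 \<Longrightarrow> bump c d x \<ge> 0"
  unfolding bump_def by auto

lemma bump_eq_0: assumes "d > 0" "\<bar>x - c\<bar> \<ge> d" shows "bump c d x = 0"
proof -
  have "d^2 \<le> (x - c)^2" using assms by (metis abs_le_square_iff abs_of_pos)
  then show ?thesis unfolding bump_def by auto
qed

lemma has_integral_bump: assumes "d > 0" shows "(bump c d has_integral 1) {c-d..c+d}"
proof -
  define K where "K = 3 / (4 * d^3)"
  let ?G = "\<lambda>x. K * (d^2 * x - (x - c)^3 / 3)"
  have "((\<lambda>x. K * (d^2 - (x - c)^2)) has_integral ?G (c+d) - ?G (c-d)) {c-d..c+d}"
    using assms by (intro fundamental_theorem_of_calculus)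
      (auto intro!: derivative_eq_intros simp: has_real_derivative_iff_has_vector_derivative[symmetric])
  moreover have "?G (c+d) - ?G (c-d) = 1"
  proof -
    have "(c + d - c) ^ 3 = d^3" "(c - d - c) ^ 3 = - (d ^ 3)"
      by (simp_all add: power3_eq_cube)
    then have "?G (c+d) - ?G (c-d) = K * (4 * d^3 / 3)"
      by (simp add: algebra_simps power2_eq_square power3_eq_cube)
    then show ?thesis unfolding K_def using assms by simp
  qed
  moreover have "bump c d x = K * (d^2 - (x - c)^2)" if "x \<in> {c-d..c+d}" for x
  proof -
    have "\<bar>x - c\<bar> \<le> \<bar>d\<bar>" using that assms by auto
    then have "(x - c)^2 \<le> d^2" by (simp only: abs_le_square_iff)
    then show ?thesis unfolding bump_def K_def by auto
  qed
  ultimately show ?thesis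
    using has_integral_cong[of "{c-d..c+d}" "bump c d" "\<lambda>x. K * (d^2 - (x - c)^2)"] by simp
qed

lemma has_real_derivative_integral_from:
  fixes k :: "real \<Rightarrow> real"
  assumes k: "continuous_on UNIV k" and k_vanish: "\<And>y. y \<le> l \<Longrightarrow> k y = 0"
  shows "((\<lambda>x. integral {l..x} k) has_real_derivative k x) (at x)"
proof -
  define M where "M = min x l - 1"
  define N where "N = max x l + 1"
  have vanish: "integral {M..u} k = 0" if "u \<le> l" for u
    using k_vanish that by (intro integral_unique has_integral_is_0) auto
  have eq: "integral {l..u} k = integral {M..u} k" for u
  proof (cases "u \<ge> l")
    case True
    have "integral {M..l} k + integral {l..u} k = integral {M..u} k"
      using True M_def by (intro Henstock_Kurzweil_Integration.integral_combine
          integrable_continuous_interval continuous_on_subset[OF k]) auto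
    then show ?thesis using vanish[of l] by simp
  next
    case False
    then show ?thesis using vanish[of u] by simp
  qed
  have "((\<lambda>u. integral {M..u} k) has_real_derivative k x) (at x within {M..N})"
    using M_def N_def by (intro integral_has_real_derivative continuous_on_subset[OF k]) auto
  then have "((\<lambda>u. integral {M..u} k) has_real_derivative k x) (at x)"
    using at_within_Icc_at[of M x N] M_def N_def by auto
  then show ?thesis unfolding eq .
qed

definition smooth_step :: "real \<Rightarrow> real \<Rightarrow> real \<Rightarrow> real" where
  "smooth_step c d x = integral {c-d..x} (bump c d)"

lemma has_real_derivative_smooth_step:
  "d > 0 \<Longrightarrow> (smooth_step c d has_real_derivative bump c d x) (at x)"
  unfolding smooth_step_def[abs_def]
  by (intro has_real_derivative_integral_from continuous_on_bump bump_eq_0) auto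

lemma integral_bump_tail:
  assumes "d > 0" "c + d \<le> x"
  shows "integral {c+d..x} (bump c d) = 0"
  using assms by (intro integral_unique has_integral_is_0 bump_eq_0) auto

lemma smooth_step_eq_0: "x \<le> c - d \<Longrightarrow> smooth_step c d x = 0"
  unfolding smooth_step_def by (cases "x = c - d") auto

lemma smooth_step_eq_1:
  assumes d: "d > 0" and x: "c + d \<le> x"
  shows "smooth_step c d x = 1"
proof -
  have "integral {c-d..c+d} (bump c d) + integral {c+d..x} (bump c d) = smooth_step c d x"
    unfolding smooth_step_def using d x
    by (intro Henstock_Kurzweil_Integration.integral_combine integrable_continuous_interval
        continuous_on_bump) auto
  then show ?thesis
    using integral_unique[OF has_integral_bump[OF d]] integral_bump_tail[OF d x] by simp
qed

lemma smooth_step_bounds: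
  assumes d: "d > 0"
  shows "0 \<le> smooth_step c d x \<and> smooth_step c d x \<le> 1"
proof -
  consider "x \<le> c - d" | "c - d \<le> x" "x \<le> c + d" | "c + d \<le> x" by linarith
  then show ?thesis
  proof cases
    case 2
    have int: "bump c d integrable_on {u..v}" for u v
      by (intro integrable_continuous_interval continuous_on_bump)
    have "smooth_step c d x + integral {x..c+d} (bump c d) = integral {c-d..c+d} (bump c d)"
      unfolding smooth_step_def using 2 by (intro Henstock_Kurzweil_Integration.integral_combine int)
    moreover have "0 \<le> smooth_step c d x" "0 \<le> integral {x..c+d} (bump c d)"
      unfolding smooth_step_def using d by (auto intro!: integral_nonneg int bump_nonneg)
    ultimately show ?thesis using integral_unique[OF has_integral_bump[OF d]] by simp
  qed (use smooth_step_eq_0 smooth_step_eq_1 d in auto)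
qed

definition cutoff :: "real \<Rightarrow> real \<Rightarrow> real \<Rightarrow> real \<Rightarrow> real" where
  "cutoff a b \<delta> x = smooth_step (a - \<delta>) \<delta> x - smooth_step (b + \<delta>) \<delta> x"

lemma has_real_derivative_cutoff:
  "\<delta> > 0 \<Longrightarrow> (cutoff a b \<delta> has_real_derivative bump (a - \<delta>) \<delta> x - bump (b + \<delta>) \<delta> x) (at x)"
  unfolding cutoff_def[abs_def] by (intro DERIV_diff has_real_derivative_smooth_step)

lemma abs_cutoff_le: "\<delta> > 0 \<Longrightarrow> \<bar>cutoff a b \<delta> x\<bar> \<le> 1"
  using smooth_step_bounds[of \<delta> "a - \<delta>" x] smooth_step_bounds[of \<delta> "b + \<delta>" x] unfolding cutoff_def by auto

lemma cutoff_eq_1: "\<delta> > 0 \<Longrightarrow> x \<in> {a..b} \<Longrightarrow> cutoff a b \<delta> x = 1"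
  unfolding cutoff_def by (simp add: smooth_step_eq_0 smooth_step_eq_1)

lemma cutoff_eq_0:
  assumes "\<delta> > 0" "a \<le> b" "x \<notin> {a - 2*\<delta>..b + 2*\<delta>}"
  shows "cutoff a b \<delta> x = 0"
proof (cases "x < a - 2*\<delta>")
  case True
  then show ?thesis using assms unfolding cutoff_def by (simp add: smooth_step_eq_0)
next
  case False
  then show ?thesis using assms unfolding cutoff_def by (simp add: smooth_step_eq_1)
qed

lemma test_fun_cutoff:
  assumes \<delta>: "\<delta> > 0" and ab: "a \<le> b"
  shows "test_fun (cutoff a b \<delta>)"
  unfolding test_fun_def
proof (intro conjI)
  show "\<forall>\<xi>. cutoff a b \<delta> differentiable at \<xi>"
    using has_real_derivative_cutoff[OF \<delta>] real_differentiable_def by blast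
  have "deriv (cutoff a b \<delta>) = (\<lambda>x. bump (a - \<delta>) \<delta> x - bump (b + \<delta>) \<delta> x)"
    using has_real_derivative_cutoff[OF \<delta>] DERIV_imp_deriv by blast
  then show "continuous_on UNIV (deriv (cutoff a b \<delta>))"
    by (simp add: continuous_on_diff continuous_on_bump)
  show "\<exists>R. \<forall>\<xi>. R < \<bar>\<xi>\<bar> \<longrightarrow> cutoff a b \<delta> \<xi> = 0"
    by (intro exI[of _ "\<bar>a - 2*\<delta>\<bar> + \<bar>b + 2*\<delta>\<bar>"] allI impI cutoff_eq_0[OF \<delta> ab]) auto
qed

lemma has_integral_UNIV_if_vanishing_outside:
  fixes f :: "real \<Rightarrow> real"
  assumes "continuous_on {u..v} f" "\<And>x. x \<notin> {u..v} \<Longrightarrow> f x = 0"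
  shows "(f has_integral integral {u..v} f) UNIV"
  by (rule has_integral_on_superset[OF integrable_integral[OF integrable_continuous_interval]])
    (use assms in auto)

lemma bump_average:
  assumes d: "d > 0" and P: "continuous_on {c-d..c+d} P"
    and close: "\<And>x. x \<in> {c-d..c+d} \<Longrightarrow> \<bar>P x - y\<bar> \<le> e"
  shows "\<bar>integral {c-d..c+d} (\<lambda>x. P x * bump c d x) - y\<bar> \<le> e"
proof -
  have int: "(\<lambda>x. f x * bump c d x) integrable_on {c-d..c+d}"
    if "continuous_on {c-d..c+d} f" for f
    by (intro integrable_continuous_interval continuous_intros that continuous_on_bump)
  have one: "integral {c-d..c+d} (bump c d) = 1"
    using has_integral_bump[OF d] by (rule integral_unique)
  have "integral {c-d..c+d} (\<lambda>x. P x * bump c d x) - y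
        = integral {c-d..c+d} (\<lambda>x. (P x - y) * bump c d x)"
    using int[OF P] int[of "\<lambda>_. y"] one by (simp add: left_diff_distrib integral_diff)
  also have "\<bar>\<dots>\<bar> \<le> integral {c-d..c+d} (\<lambda>x. e * bump c d x)"
  proof -
    have Py: "continuous_on {c-d..c+d} (\<lambda>x. P x - y)" by (intro continuous_intros P)
    have "norm (integral {c-d..c+d} (\<lambda>x. (P x - y) * bump c d x))
          \<le> integral {c-d..c+d} (\<lambda>x. e * bump c d x)"
      by (rule integral_norm_bound_integral[OF int[OF Py] int[of "\<lambda>_. e"]])
        (use close d in \<open>auto simp: abs_mult bump_nonneg intro!: mult_right_mono\<close>)
    then show ?thesis by simp
  qed
  also have "\<dots> = e" using one by simp
  finally show ?thesis .
qed

lemma continuous_on_cutoff: "\<delta> > 0 \<Longrightarrow> continuous_on S (cutoff a b \<delta>)"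
  using has_real_derivative_cutoff by (meson DERIV_isCont continuous_at_imp_continuous_on)

lemma weak_solution_cutoff:
  fixes P g :: "real \<Rightarrow> real"
  assumes P: "continuous_on UNIV P" and g: "continuous_on UNIV g"
    and weak: "\<And>\<phi>. test_fun \<phi> \<Longrightarrow> ((\<lambda>\<xi>. P \<xi> * deriv \<phi> \<xi> - g \<xi> * \<phi> \<xi>) has_integral 0) UNIV"
    and ab: "a \<le> b" and \<delta>: "\<delta> > 0"
  shows "integral {a - 2*\<delta>..a} (\<lambda>x. P x * bump (a - \<delta>) \<delta> x)
           - integral {b..b + 2*\<delta>} (\<lambda>x. P x * bump (b + \<delta>) \<delta> x)
         = integral {a - 2*\<delta>..b + 2*\<delta>} (\<lambda>x. g x * cutoff a b \<delta> x)"
    (is "?J1 - ?J2 = ?J3")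
proof -
  have "bump (a - \<delta>) \<delta> x = 0" if "x \<notin> {a - 2*\<delta>..a}" for x
    using \<delta> that by (intro bump_eq_0) auto
  then have "((\<lambda>x. P x * bump (a - \<delta>) \<delta> x) has_integral ?J1) UNIV"
    by (intro has_integral_UNIV_if_vanishing_outside)
      (auto intro!: continuous_intros continuous_on_subset[OF P] continuous_on_bump)
  moreover have "bump (b + \<delta>) \<delta> x = 0" if "x \<notin> {b..b + 2*\<delta>}" for x
    using \<delta> that by (intro bump_eq_0) auto
  then have "((\<lambda>x. P x * bump (b + \<delta>) \<delta> x) has_integral ?J2) UNIV"
    by (intro has_integral_UNIV_if_vanishing_outside)
      (auto intro!: continuous_intros continuous_on_subset[OF P] continuous_on_bump)
  moreover have "((\<lambda>x. g x * cutoff a b \<delta> x) has_integral ?J3) UNIV"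
    using cutoff_eq_0[OF \<delta> ab]
    by (intro has_integral_UNIV_if_vanishing_outside)
      (auto intro!: continuous_intros continuous_on_subset[OF g] continuous_on_cutoff[OF \<delta>])
  ultimately have J: "((\<lambda>x. P x * (bump (a - \<delta>) \<delta> x - bump (b + \<delta>) \<delta> x) - g x * cutoff a b \<delta> x) has_integral ?J1 - ?J2 - ?J3) UNIV"
    unfolding right_diff_distrib by (intro has_integral_diff)
  have \<phi>': "deriv (cutoff a b \<delta>) = (\<lambda>x. bump (a - \<delta>) \<delta> x - bump (b + \<delta>) \<delta> x)"
    using has_real_derivative_cutoff[OF \<delta>] DERIV_imp_deriv by blast
  have "((\<lambda>x. P x * (bump (a - \<delta>) \<delta> x - bump (b + \<delta>) \<delta> x) - g x * cutoff a b \<delta> x) has_integral 0) UNIV"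
    using weak[OF test_fun_cutoff[OF \<delta> ab]] unfolding \<phi>' .
  with J have "?J1 - ?J2 - ?J3 = 0" by (rule has_integral_unique)
  then show ?thesis by simp
qed

lemma weak_solution_estimate:
  fixes P g :: "real \<Rightarrow> real"
  assumes P: "continuous_on UNIV P" and g: "continuous_on UNIV g"
    and weak: "\<And>\<phi>. test_fun \<phi> \<Longrightarrow> ((\<lambda>\<xi>. P \<xi> * deriv \<phi> \<xi> - g \<xi> * \<phi> \<xi>) has_integral 0) UNIV"
    and ab: "a < b" and \<delta>: "\<delta> > 0"
    and Pa: "\<And>x. x \<in> {a - 2*\<delta>..a} \<Longrightarrow> \<bar>P x - P a\<bar> \<le> ea"
    and Pb: "\<And>x. x \<in> {b..b + 2*\<delta>} \<Longrightarrow> \<bar>P x - P b\<bar> \<le> eb"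
    and gM: "\<And>x. x \<in> {a - 2*\<delta>..b + 2*\<delta>} \<Longrightarrow> \<bar>g x\<bar> \<le> M"
  shows "\<bar>P a - P b - integral {a..b} g\<bar> \<le> ea + eb + 4*\<delta>*M"
proof -
  define \<phi> where "\<phi> = cutoff a b \<delta>"
  have g\<phi>: "continuous_on {u..v} (\<lambda>x. g x * \<phi> x)" for u v
    unfolding \<phi>_def by (intro continuous_intros continuous_on_subset[OF g] continuous_on_cutoff[OF \<delta>]) auto
  have "a - \<delta> - \<delta> = a - 2*\<delta>" "b + \<delta> + \<delta> = b + 2*\<delta>" by simp_all
  then have "\<bar>integral {a - 2*\<delta>..a} (\<lambda>x. P x * bump (a - \<delta>) \<delta> x) - P a\<bar> \<le> ea"
    "\<bar>integral {b..b + 2*\<delta>} (\<lambda>x. P x * bump (b + \<delta>) \<delta> x) - P b\<bar> \<le> eb"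
    using bump_average[OF \<delta>, of "a - \<delta>" P "P a" ea] bump_average[OF \<delta>, of "b + \<delta>" P "P b" eb]
      Pa Pb continuous_on_subset[OF P]
    by (simp_all add: add.commute)
  moreover have "integral {a - 2*\<delta>..b + 2*\<delta>} (\<lambda>x. g x * \<phi> x)
      = integral {a - 2*\<delta>..a} (\<lambda>x. g x * \<phi> x) + integral {a..b} g
        + integral {b..b + 2*\<delta>} (\<lambda>x. g x * \<phi> x)"
  proof -
    have "integral {a..b} (\<lambda>x. g x * \<phi> x) = integral {a..b} g"
      unfolding \<phi>_def using cutoff_eq_1[OF \<delta>] by (intro integral_cong) auto
    moreover have "integral {a - 2*\<delta>..b + 2*\<delta>} (\<lambda>x. g x * \<phi> x)
        = integral {a - 2*\<delta>..a} (\<lambda>x. g x * \<phi> x) + integral {a..b + 2*\<delta>} (\<lambda>x. g x * \<phi> x)"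
      using \<delta> ab g\<phi>
      by (intro Henstock_Kurzweil_Integration.integral_combine[symmetric] integrable_continuous_interval) auto
    moreover have "integral {a..b + 2*\<delta>} (\<lambda>x. g x * \<phi> x)
        = integral {a..b} (\<lambda>x. g x * \<phi> x) + integral {b..b + 2*\<delta>} (\<lambda>x. g x * \<phi> x)"
      using \<delta> ab g\<phi>
      by (intro Henstock_Kurzweil_Integration.integral_combine[symmetric] integrable_continuous_interval) auto
    ultimately show ?thesis by simp
  qed
  moreover have "\<bar>g x * \<phi> x\<bar> \<le> M" if "x \<in> {a - 2*\<delta>..b + 2*\<delta>}" for x
    using gM[OF that] abs_cutoff_le[OF \<delta>, of a b x] unfolding \<phi>_def abs_mult
    by (metis abs_ge_zero mult_left_le order_trans)
  then have "\<bar>integral {a - 2*\<delta>..a} (\<lambda>x. g x * \<phi> x)\<bar> \<le> M * (2*\<delta>)"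
      "\<bar>integral {b..b + 2*\<delta>} (\<lambda>x. g x * \<phi> x)\<bar> \<le> M * (2*\<delta>)"
    using integral_bound[of "a - 2*\<delta>" a "\<lambda>x. g x * \<phi> x" M, OF _ g\<phi>]
      integral_bound[of b "b + 2*\<delta>" "\<lambda>x. g x * \<phi> x" M, OF _ g\<phi>] \<delta> ab by auto
  moreover have "M * (2*\<delta>) + M * (2*\<delta>) = 4*\<delta>*M" by simp
  ultimately show ?thesis
    using weak_solution_cutoff[OF P g weak less_imp_le[OF ab] \<delta>] unfolding \<phi>_def by linarith
qed

lemma weak_solution_integral_identity:
  fixes P g :: "real \<Rightarrow> real"
  assumes P: "continuous_on UNIV P" and g: "continuous_on UNIV g"
    and weak: "\<And>\<phi>. test_fun \<phi> \<Longrightarrow> ((\<lambda>\<xi>. P \<xi> * deriv \<phi> \<xi> - g \<xi> * \<phi> \<xi>) has_integral 0) UNIV"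
    and ab: "a < b"
  shows "P a - P b = integral {a..b} g"
proof -
  have "bounded (g ` {a-1..b+1})"
    by (intro compact_imp_bounded compact_continuous_image continuous_on_subset[OF g]) auto
  then obtain M where M: "\<And>x. x \<in> {a-1..b+1} \<Longrightarrow> \<bar>g x\<bar> \<le> M"
    unfolding bounded_real by (metis atLeastAtMost_iff image_eqI)
  have small: "\<bar>P a - P b - integral {a..b} g\<bar> \<le> 3 * e" if e: "e > 0" for e
  proof -
    obtain da db where da: "da > 0" "\<And>x. dist x a < da \<Longrightarrow> dist (P x) (P a) < e"
      and db: "db > 0" "\<And>x. dist x b < db \<Longrightarrow> dist (P x) (P b) < e"
      using P e unfolding continuous_on_iff by (meson UNIV_I)
    define \<delta> where "\<delta> = min (min da db / 3) (min (1/2) (e / (4 * (\<bar>M\<bar> + 1))))"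
    have \<delta>: "\<delta> > 0" "2*\<delta> < da" "2*\<delta> < db" "2*\<delta> \<le> 1"
      unfolding \<delta>_def using da db e by auto
    have "4 * \<delta> * M \<le> 4 * \<delta> * (\<bar>M\<bar> + 1)" using \<delta> by simp
    also have "\<dots> \<le> e"
    proof -
      have "\<delta> \<le> e / (4 * (\<bar>M\<bar> + 1))" unfolding \<delta>_def by linarith
      then show ?thesis by (simp add: field_simps add_pos_nonneg)
    qed
    finally have "4 * \<delta> * M \<le> e" .
    moreover have "\<bar>P a - P b - integral {a..b} g\<bar> \<le> e + e + 4 * \<delta> * M"
    proof (rule weak_solution_estimate[OF P g weak ab \<delta>(1)])
      fix x assume "x \<in> {a - 2*\<delta>..a}"
      then show "\<bar>P x - P a\<bar> \<le> e" using \<delta> da(2)[of x] by (auto simp: dist_real_def)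
    next
      fix x assume "x \<in> {b..b + 2*\<delta>}"
      then show "\<bar>P x - P b\<bar> \<le> e" using \<delta> db(2)[of x] by (auto simp: dist_real_def)
    next
      fix x assume "x \<in> {a - 2*\<delta>..b + 2*\<delta>}"
      then show "\<bar>g x\<bar> \<le> M" using \<delta> by (intro M) auto
    qed
    ultimately show ?thesis by linarith
  qed
  have "\<bar>P a - P b - integral {a..b} g\<bar> \<le> 0 + e" if "e > 0" for e
    using small[of "e / 3"] that by simp
  then have "\<bar>P a - P b - integral {a..b} g\<bar> \<le> 0"
    by (rule field_le_epsilon)
  then show ?thesis by simp
qed

lemma eventually_at_left_0_neg: "\<forall>\<^sub>F \<xi> in at_left 0. \<xi> < (0::real)"
  by (simp add: eventually_at_filter)

lemma alpha_powr_limit_eq: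
  fixes c p B b :: real
  assumes c: "c > 0" and p: "p > 1" and b: "b > 0"
  shows "alpha p * c powr (alpha p - 1) * (B * b / (b + 1))
    = B * b / ((p - 1) * (b + 1) * c powr (1 - alpha p))"
proof -
  define C where "C = c powr (1 - alpha p)"
  have e: "c powr (alpha p - 1) = 1 / C"
    unfolding C_def using powr_minus_divide[of c "1 - alpha p"] by simp
  have "C > 0" "b + 1 > 0" "p - 1 > 0" using c b p by (auto simp: C_def)
  then show ?thesis
    unfolding C_def[symmetric] e by (simp add: alpha_def field_simps)
qed

locale finite_front =
  fixes m p \<gamma> c :: real and h h' U :: "real \<Rightarrow> real"
  assumes m_pos: "m > 0" and p_gt: "p > 1" and mp: "m * (p - 1) > 1"
    and h_deriv: "\<forall>x\<ge>0. (h has_real_derivative h' x) (at x within {0..})"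
    and h0: "h 0 = 0"
    and c_pos: "c > 0" and \<gamma>_nonneg: "\<gamma> \<ge> 0"
    and tw: "tw_solution m p h \<gamma> c U"
    and U_cont: "continuous_on UNIV U" and U_antimono: "antimono U"
    and U_pos_iff: "\<And>\<xi>. U \<xi> > 0 \<longleftrightarrow> \<xi> < 0"
    and U_zero: "\<And>\<xi>. \<xi> \<ge> 0 \<Longrightarrow> U \<xi> = 0"
begin

definition "w = (\<lambda>\<xi>. U \<xi> powr m)"
definition "w' = deriv w"
definition "\<Phi> = flux m p U"
(* The equation says P' = -g; it only holds weakly, see P_eq_integral. *)
definition "P = (\<lambda>\<xi>. c * U \<xi> + \<Phi> \<xi>)"
definition "g = (\<lambda>\<xi>. \<gamma> * \<Phi> \<xi> + h (U \<xi>))"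

lemma U_nonneg: "U \<xi> \<ge> 0"
  using U_pos_iff[of \<xi>] U_zero[of \<xi>] by (cases "\<xi> < 0") auto

lemma U_pos: "\<xi> < 0 \<Longrightarrow> U \<xi> > 0"
  using U_pos_iff by blast

lemma U_le: "x \<le> y \<Longrightarrow> U y \<le> U x"
  using U_antimono by (auto simp: antimono_def)

lemma has_real_derivative_w: "(w has_real_derivative w' \<xi>) (at \<xi>)"
  using tw unfolding tw_solution_def w_def w'_def
  by (simp add: DERIV_deriv_iff_real_differentiable)

lemma continuous_on_w': "continuous_on UNIV w'"
  using tw unfolding tw_solution_def w_def w'_def by simp

lemma w'_nonpos: "w' \<xi> \<le> 0"
proof (rule ccontr)
  assume "\<not> w' \<xi> \<le> 0"
  then have "w' \<xi> > 0" by simp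
  from DERIV_pos_inc_right[OF has_real_derivative_w this]
  obtain d where "d > 0" "\<forall>k>0. k < d \<longrightarrow> w \<xi> < w (\<xi> + k)" by blast
  then have "w \<xi> < w (\<xi> + d/2)" by simp
  moreover have "w (\<xi> + d/2) \<le> w \<xi>"
    unfolding w_def using \<open>d > 0\<close> U_le U_nonneg m_pos by (intro powr_mono2) auto
  ultimately show False by simp
qed

lemma w'_zero: "\<xi> \<ge> 0 \<Longrightarrow> w' \<xi> = 0"
  using U_zero by (intro DERIV_local_min[OF has_real_derivative_w, of 1]) (auto simp: w_def)

lemma \<Phi>_eq: "\<Phi> \<xi> = - ((- w' \<xi>) powr (p - 1))"
proof -
  have "\<Phi> \<xi> = - ((- w' \<xi>) powr (p - 2) * (- w' \<xi>))"
    using w'_nonpos[of \<xi>] unfolding \<Phi>_def flux_def w'_def w_def by (simp add: abs_of_nonpos)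
  also have "\<dots> = - ((- w' \<xi>) powr (p - 1))"
    using powr_add[of "- w' \<xi>" "p - 2" 1] w'_nonpos[of \<xi>] by simp
  finally show ?thesis .
qed

lemma \<Phi>_nonpos: "\<Phi> \<xi> \<le> 0"
  by (simp add: \<Phi>_eq)

lemma \<Phi>_zero: "\<xi> \<ge> 0 \<Longrightarrow> \<Phi> \<xi> = 0"
  using p_gt by (simp add: \<Phi>_eq w'_zero)

lemma continuous_on_\<Phi>: "continuous_on UNIV \<Phi>"
  unfolding \<Phi>_eq[abs_def] using w'_nonpos p_gt
  by (intro continuous_on_minus continuous_on_powr' continuous_on_w' continuous_on_const) auto

lemma continuous_on_h: "continuous_on {0..} h"
  unfolding continuous_on_eq_continuous_within
  using h_deriv DERIV_continuous by blast

lemma continuous_on_g: "continuous_on UNIV g"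
proof -
  have "continuous_on UNIV (\<lambda>\<xi>. h (U \<xi>))"
    by (rule continuous_on_compose2[OF continuous_on_h U_cont]) (auto simp: U_nonneg)
  then show ?thesis unfolding g_def by (intro continuous_intros continuous_on_\<Phi>)
qed

lemma continuous_on_P: "continuous_on UNIV P"
  unfolding P_def by (intro continuous_intros continuous_on_\<Phi> U_cont)

lemma P_eq_integral: "\<xi> \<le> 0 \<Longrightarrow> P \<xi> = integral {\<xi>..0} g"
proof (cases "\<xi> = 0")
  case False
  assume "\<xi> \<le> 0"
  have weak: "((\<lambda>\<xi>. P \<xi> * deriv \<phi> \<xi> - g \<xi> * \<phi> \<xi>) has_integral 0) UNIV" if "test_fun \<phi>" for \<phi>
  proof -
    have "\<forall>\<phi>. test_fun \<phi> \<longrightarrow> ((\<lambda>\<xi>. (c * U \<xi> + flux m p U \<xi>) * deriv \<phi> \<xi>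
        - (\<gamma> * flux m p U \<xi> + h (U \<xi>)) * \<phi> \<xi>) has_integral 0) UNIV"
      using tw unfolding tw_solution_def by (elim conjE)
    then show ?thesis using that unfolding P_def g_def \<Phi>_def by simp
  qed
  have "P 0 = 0" unfolding P_def using U_zero \<Phi>_zero by simp
  then show ?thesis
    using weak_solution_integral_identity[OF continuous_on_P continuous_on_g weak, of \<xi> 0]
      \<open>\<xi> \<le> 0\<close> False by simp
qed (simp add: P_def U_zero \<Phi>_zero)

lemma U_tendsto_0: "(U \<longlongrightarrow> 0) (at_left 0)"
proof -
  have "isCont U 0" using U_cont by (simp add: continuous_on_eq_continuous_at)
  then have "(U \<longlongrightarrow> 0) (at 0)" using U_zero[of 0] by (simp add: isCont_def)
  then show ?thesis by (rule tendsto_within_subset) simp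
qed

lemma filterlim_U: "filterlim U (at_right 0) (at_left 0)"
  unfolding filterlim_at
proof
  show "\<forall>\<^sub>F x in at_left 0. U x \<in> {0<..} \<and> U x \<noteq> 0"
    using eventually_at_left_0_neg by eventually_elim (metis U_pos greaterThan_iff less_irrefl)
qed (rule U_tendsto_0)

lemma h_over_U_tendsto: "((\<lambda>\<xi>. h (U \<xi>) / U \<xi>) \<longlongrightarrow> h' 0) (at_left 0)"
proof -
  have "(h has_real_derivative h' 0) (at 0 within {0..})" using h_deriv by simp
  then have "((\<lambda>y. (h y - h 0) / (y - 0)) \<longlongrightarrow> h' 0) (at 0 within {0..})"
    by (simp add: has_field_derivative_iff)
  then have "((\<lambda>y. h y / y) \<longlongrightarrow> h' 0) (at 0 within {0..})" using h0 by simp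
  then have "((\<lambda>y. h y / y) \<longlongrightarrow> h' 0) (at_right 0)"
    by (rule tendsto_within_subset) auto
  then show ?thesis by (rule filterlim_compose[OF _ filterlim_U])
qed

definition "Q = (\<lambda>t. integral {t..0} (\<lambda>s. \<bar>g s\<bar>))"

lemma integrable_abs_g: "(\<lambda>s. \<bar>g s\<bar>) integrable_on {a..b}"
  by (intro integrable_continuous_interval continuous_intros continuous_on_subset[OF continuous_on_g]) simp

lemma abs_P_le_Q: "t \<le> 0 \<Longrightarrow> \<bar>P t\<bar> \<le> Q t"
proof -
  have "g integrable_on {t..0}"
    by (intro integrable_continuous_interval continuous_on_subset[OF continuous_on_g]) auto
  from integral_norm_bound_integral[OF this integrable_abs_g]
  show "t \<le> 0 \<Longrightarrow> \<bar>P t\<bar> \<le> Q t" unfolding Q_def by (simp add: P_eq_integral)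
qed

lemma Q_antimono: "\<xi> \<le> t \<Longrightarrow> t \<le> 0 \<Longrightarrow> Q t \<le> Q \<xi>"
proof -
  assume "\<xi> \<le> t" "t \<le> 0"
  then have "integral {\<xi>..t} (\<lambda>s. \<bar>g s\<bar>) + Q t = Q \<xi>"
    unfolding Q_def by (intro Henstock_Kurzweil_Integration.integral_combine integrable_abs_g)
  moreover have "integral {\<xi>..t} (\<lambda>s. \<bar>g s\<bar>) \<ge> 0"
    by (intro integral_nonneg integrable_abs_g) auto
  ultimately show ?thesis by linarith
qed

lemma Q_nonneg: "Q t \<ge> 0"
  unfolding Q_def by (intro integral_nonneg integrable_abs_g) auto

lemma abs_g_le:
  assumes "t \<le> 0" and "\<bar>h (U t)\<bar> \<le> L * U t"
  shows "\<bar>g t\<bar> \<le> (\<gamma> * c + L) * U t + \<gamma> * Q t"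
proof -
  have \<Phi>: "\<bar>\<Phi> t\<bar> \<le> c * U t + Q t"
    using \<Phi>_nonpos[of t] abs_P_le_Q[OF assms(1)] unfolding P_def by linarith
  have "\<bar>g t\<bar> \<le> \<gamma> * \<bar>\<Phi> t\<bar> + \<bar>h (U t)\<bar>"
    unfolding g_def using \<gamma>_nonneg abs_triangle_ineq[of "\<gamma> * \<Phi> t" "h (U t)"]
    by (simp add: abs_mult)
  also have "\<dots> \<le> \<gamma> * (c * U t + Q t) + L * U t"
    using \<Phi> assms(2) \<gamma>_nonneg by (intro add_mono mult_left_mono) auto
  finally show ?thesis by (simp add: algebra_simps)
qed

lemma h_U_linear_bound: "\<exists>L\<ge>0. \<exists>b<0. \<forall>t\<in>{b<..0}. \<bar>h (U t)\<bar> \<le> L * U t"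
proof -
  have "\<forall>\<^sub>F \<xi> in at_left 0. dist (h (U \<xi>) / U \<xi>) (h' 0) < 1"
    using h_over_U_tendsto by (rule tendstoD) simp
  then obtain b where b: "b < 0" "\<And>t. b < t \<Longrightarrow> t < 0 \<Longrightarrow> dist (h (U t) / U t) (h' 0) < 1"
    unfolding eventually_at_left_field by blast
  have "\<bar>h (U t)\<bar> \<le> (\<bar>h' 0\<bar> + 1) * U t" if "t \<in> {b<..0}" for t
  proof (cases "t = 0")
    case False
    then have "t < 0" using that by simp
    then have "\<bar>h (U t) / U t\<bar> \<le> \<bar>h' 0\<bar> + 1" using b(2)[of t] that by (simp add: dist_real_def)
    then show ?thesis using U_pos[OF \<open>t < 0\<close>] by (simp add: abs_div divide_le_eq)
  qed (simp add: U_zero h0)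
  then show ?thesis using b(1) by (intro exI[of _ "\<bar>h' 0\<bar> + 1"] conjI exI[of _ b]) auto
qed

lemma Q_le_linear:
  assumes \<xi>: "\<xi> \<le> 0" and L: "L \<ge> 0" and hU: "\<And>t. t \<in> {\<xi>..0} \<Longrightarrow> \<bar>h (U t)\<bar> \<le> L * U t"
  shows "Q \<xi> \<le> (- \<xi>) * ((\<gamma> * c + L) * U \<xi> + \<gamma> * Q \<xi>)"
proof -
  have "\<bar>g t\<bar> \<le> (\<gamma> * c + L) * U \<xi> + \<gamma> * Q \<xi>" if t: "t \<in> {\<xi>..0}" for t
  proof -
    have "\<bar>g t\<bar> \<le> (\<gamma> * c + L) * U t + \<gamma> * Q t"
      using t hU[OF t] by (intro abs_g_le) auto
    also have "\<dots> \<le> (\<gamma> * c + L) * U \<xi> + \<gamma> * Q \<xi>"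
      using t \<gamma>_nonneg c_pos L by (intro add_mono mult_left_mono U_le Q_antimono) auto
    finally show ?thesis .
  qed
  then have "Q \<xi> \<le> integral {\<xi>..0} (\<lambda>_. (\<gamma> * c + L) * U \<xi> + \<gamma> * Q \<xi>)"
    unfolding Q_def by (intro integral_le integrable_abs_g) auto
  then show ?thesis using \<xi> by simp
qed

(* Q_le_linear bounds Q by itself with the factor gamma (-xi), which is at most 1/2 close
   to the front, so the Q term can be absorbed into the left-hand side. *)
lemma P_linear_bound: "\<exists>C. \<forall>\<^sub>F \<xi> in at_left 0. \<bar>P \<xi>\<bar> \<le> C * (- \<xi>) * U \<xi>"
proof -
  obtain L b where L: "L \<ge> 0" and b: "b < 0" and hU: "\<And>t. t \<in> {b<..0} \<Longrightarrow> \<bar>h (U t)\<bar> \<le> L * U t"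
    using h_U_linear_bound by blast
  define \<xi>0 where "\<xi>0 = max b (- 1 / (2 * \<gamma> + 1))"
  have "\<xi>0 < 0" unfolding \<xi>0_def using b \<gamma>_nonneg by (simp add: field_simps)
  have "\<bar>P \<xi>\<bar> \<le> 2 * (\<gamma> * c + L) * (- \<xi>) * U \<xi>" if \<xi>: "\<xi>0 < \<xi>" "\<xi> < 0" for \<xi>
  proof -
    have "- \<xi> \<le> 1 / (2 * \<gamma> + 1)" using \<xi> unfolding \<xi>0_def by auto
    then have "\<gamma> * (- \<xi>) \<le> \<gamma> / (2 * \<gamma> + 1)"
      using \<gamma>_nonneg by (metis mult_left_mono times_divide_eq_right mult_1_right)
    also have "\<dots> \<le> 1/2" using \<gamma>_nonneg by (simp add: field_simps)
    finally have "\<gamma> * (- \<xi>) * Q \<xi> \<le> Q \<xi> / 2"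
      using Q_nonneg[of \<xi>] by (metis mult_right_mono mult.commute times_divide_eq_left mult_1)
    moreover have "Q \<xi> \<le> (- \<xi>) * ((\<gamma> * c + L) * U \<xi> + \<gamma> * Q \<xi>)"
      using \<xi> L hU unfolding \<xi>0_def by (intro Q_le_linear) auto
    ultimately have "Q \<xi> \<le> 2 * (\<gamma> * c + L) * (- \<xi>) * U \<xi>"
      by (simp add: algebra_simps)
    then show ?thesis using abs_P_le_Q[of \<xi>] \<xi> by linarith
  qed
  then show ?thesis
    using \<open>\<xi>0 < 0\<close> unfolding eventually_at_left_field by blast
qed

definition "q = (\<lambda>\<xi>. \<Phi> \<xi> / U \<xi>)"

lemma q_tendsto: "(q \<longlongrightarrow> - c) (at_left 0)"
proof -
  obtain C where C: "\<forall>\<^sub>F \<xi> in at_left 0. \<bar>P \<xi>\<bar> \<le> C * (- \<xi>) * U \<xi>"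
    using P_linear_bound by blast
  have "\<forall>\<^sub>F \<xi> in at_left 0. norm (q \<xi> + c) \<le> C * (- \<xi>)"
    using C eventually_at_left_0_neg
  proof eventually_elim
    case (elim \<xi>)
    have "q \<xi> + c = P \<xi> / U \<xi>"
      unfolding q_def P_def using U_pos[OF elim(2)] by (simp add: field_simps)
    then show ?case using elim U_pos[OF elim(2)] by (simp add: abs_div divide_le_eq)
  qed
  moreover have "((\<lambda>\<xi>. C * (- \<xi>)) \<longlongrightarrow> C * (- 0)) (at_left (0::real))"
    by (intro tendsto_intros)
  then have "((\<lambda>\<xi>. C * (- \<xi>)) \<longlongrightarrow> 0) (at_left (0::real))" by simp
  ultimately have "((\<lambda>\<xi>. q \<xi> + c) \<longlongrightarrow> 0) (at_left 0)"
    by (rule Lim_null_comparison)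
  then have "((\<lambda>\<xi>. q \<xi> + c - c) \<longlongrightarrow> 0 - c) (at_left 0)" by (intro tendsto_intros)
  then show ?thesis by simp
qed

definition "\<alpha> = alpha p"
definition "\<beta> = m - \<alpha>"
definition "v = (\<lambda>\<xi>. - ((- q \<xi>) powr \<alpha>))"
definition "X = (\<lambda>\<xi>. U \<xi> powr (\<beta> + 1))"

lemma \<alpha>_inverse: "\<alpha> * (p - 1) = 1"
  unfolding \<alpha>_def alpha_def using p_gt by simp

lemma \<beta>_pos: "\<beta> > 0"
  unfolding \<beta>_def \<alpha>_def alpha_def using mp p_gt by (simp add: field_simps)

lemma neg_q_nonneg: "- q \<xi> \<ge> 0"
  unfolding q_def using \<Phi>_nonpos[of \<xi>] U_nonneg[of \<xi>] by (simp add: divide_nonpos_nonneg)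

lemma v_eq: assumes "\<xi> < 0" shows "v \<xi> = w' \<xi> / U \<xi> powr \<alpha>"
proof -
  have "(- q \<xi>) powr \<alpha> = ((- w' \<xi>) powr (p - 1)) powr \<alpha> / U \<xi> powr \<alpha>"
    unfolding q_def \<Phi>_eq using U_pos[OF assms] by (simp add: powr_divide)
  also have "((- w' \<xi>) powr (p - 1)) powr \<alpha> = - w' \<xi>"
    using w'_nonpos[of \<xi>] \<alpha>_inverse by (simp add: powr_powr mult.commute)
  finally show ?thesis unfolding v_def by simp
qed

lemma flux_v: "\<bar>v \<xi>\<bar> powr (p - 2) * v \<xi> = q \<xi>"
proof -
  define z where "z = (- q \<xi>) powr \<alpha>"
  have "\<bar>v \<xi>\<bar> powr (p - 2) * v \<xi> = - (z powr (p - 2) * z)"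
    unfolding v_def z_def[symmetric] by (simp add: z_def)
  also have "\<dots> = - (z powr (p - 1))"
    using powr_add[of z "p - 2" 1] by (simp add: z_def)
  also have "z powr (p - 1) = - q \<xi>"
    unfolding z_def using \<alpha>_inverse neg_q_nonneg by (simp add: powr_powr)
  finally show ?thesis by simp
qed

lemma has_real_derivative_U:
  assumes "\<xi> < 0" shows "(U has_real_derivative U \<xi> * v \<xi> / (m * U \<xi> powr \<beta>)) (at \<xi>)"
proof -
  have u: "U \<xi> > 0" and w: "w \<xi> > 0" using U_pos[OF assms] by (simp_all add: w_def)
  have U_eq: "U = (\<lambda>s. w s powr (1/m))"
    unfolding w_def using m_pos U_nonneg by (simp add: powr_powr)
  have "((\<lambda>s. w s powr (1/m)) has_real_derivative
      w \<xi> powr (1/m) * (0 * ln (w \<xi>) + w' \<xi> * (1/m) / w \<xi>)) (at \<xi>)"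
    by (rule DERIV_powr[OF has_real_derivative_w w DERIV_const])
  moreover have "w \<xi> powr (1/m) * (0 * ln (w \<xi>) + w' \<xi> * (1/m) / w \<xi>)
      = U \<xi> * v \<xi> / (m * U \<xi> powr \<beta>)"
    using u m_pos unfolding v_eq[OF assms] \<beta>_def w_def
    by (simp add: powr_powr powr_diff field_simps)
  ultimately show ?thesis by (simp add: U_eq[symmetric])
qed

definition "V = (\<lambda>\<xi>. m / (m - alpha p) * U \<xi> powr (m - alpha p))"

lemma has_real_derivative_V: assumes "\<xi> < 0" shows "(V has_real_derivative v \<xi>) (at \<xi>)"
proof -
  have u: "U \<xi> > 0" using U_pos[OF assms] .
  have "((\<lambda>\<xi>. m / \<beta> * U \<xi> powr \<beta>) has_real_derivative
      m / \<beta> * (U \<xi> powr \<beta> * (0 * ln (U \<xi>) + U \<xi> * v \<xi> / (m * U \<xi> powr \<beta>) * \<beta> / U \<xi>))) (at \<xi>)"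
    by (intro DERIV_cmult DERIV_powr[OF has_real_derivative_U[OF assms] u DERIV_const])
  then show ?thesis
    unfolding V_def \<alpha>_def[symmetric] \<beta>_def[symmetric] using u m_pos \<beta>_pos by (simp add: field_simps)
qed

lemma has_real_derivative_X:
  assumes "\<xi> < 0" shows "(X has_real_derivative (\<beta> + 1) * U \<xi> * v \<xi> / m) (at \<xi>)"
proof -
  have u: "U \<xi> > 0" using U_pos[OF assms] .
  have "(X has_real_derivative
      U \<xi> powr (\<beta> + 1) * (0 * ln (U \<xi>) + U \<xi> * v \<xi> / (m * U \<xi> powr \<beta>) * (\<beta> + 1) / U \<xi>)) (at \<xi>)"
    unfolding X_def by (rule DERIV_powr[OF has_real_derivative_U[OF assms] u DERIV_const])
  moreover have "U \<xi> powr (\<beta> + 1) * (0 * ln (U \<xi>) + U \<xi> * v \<xi> / (m * U \<xi> powr \<beta>) * (\<beta> + 1) / U \<xi>)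
      = (\<beta> + 1) * U \<xi> * v \<xi> / m"
    using u m_pos by (simp add: powr_add field_simps)
  ultimately show ?thesis by simp
qed

lemma has_real_derivative_P: assumes "\<xi> < 0" shows "(P has_real_derivative - g \<xi>) (at \<xi>)"
proof -
  have "((\<lambda>x. integral {x..0} g) has_real_derivative - g \<xi>) (at \<xi> within {\<xi>-1..0})"
    using assms by (intro integral_has_real_derivative' continuous_on_subset[OF continuous_on_g]) auto
  then have "((\<lambda>x. integral {x..0} g) has_real_derivative - g \<xi>) (at \<xi>)"
    using at_within_Icc_at[of "\<xi>-1" \<xi> 0] assms by simp
  then show ?thesis
    by (rule has_field_derivative_transform_within_open[where S="{..<0}"])
      (use assms P_eq_integral in auto)
qed

definition "q' = (\<lambda>\<xi>. - g \<xi> / U \<xi> - P \<xi> * v \<xi> / (m * X \<xi>))"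

lemma has_real_derivative_q: assumes "\<xi> < 0" shows "(q has_real_derivative q' \<xi>) (at \<xi>)"
proof -
  have u: "U \<xi> > 0" using U_pos[OF assms] .
  have "((\<lambda>s. P s / U s) has_real_derivative
      (- g \<xi> * U \<xi> - P \<xi> * (U \<xi> * v \<xi> / (m * U \<xi> powr \<beta>))) / (U \<xi> * U \<xi>)) (at \<xi>)"
    using u by (intro DERIV_divide has_real_derivative_P has_real_derivative_U assms) simp
  moreover have "(- g \<xi> * U \<xi> - P \<xi> * (U \<xi> * v \<xi> / (m * U \<xi> powr \<beta>))) / (U \<xi> * U \<xi>) = q' \<xi>"
    unfolding q'_def X_def using u m_pos by (simp add: powr_add field_simps)
  ultimately have "((\<lambda>s. P s / U s) has_real_derivative q' \<xi>) (at \<xi>)" by simp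
  from DERIV_diff[OF this DERIV_const, of c]
  have D: "((\<lambda>s. P s / U s - c) has_real_derivative q' \<xi>) (at \<xi>)" by simp
  have "P s / U s - c = q s" if "s < 0" for s
    unfolding q_def P_def using U_pos[OF that] by (simp add: field_simps)
  then show ?thesis
    by (intro has_field_derivative_transform_within_open[OF D, where S="{..<0}"]) (use assms in auto)
qed

lemma eventually_q_neg: "\<forall>\<^sub>F \<xi> in at_left 0. q \<xi> < 0"
  using order_tendstoD(2)[OF q_tendsto, of 0] c_pos by simp

lemma v_tendsto: "(v \<longlongrightarrow> - (c powr \<alpha>)) (at_left 0)"
proof -
  have "((\<lambda>\<xi>. - q \<xi>) \<longlongrightarrow> c) (at_left 0)"
    using tendsto_minus[OF q_tendsto] by simp
  then show ?thesis unfolding v_def using c_pos by (intro tendsto_intros) auto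
qed

lemma neg_g_over_U_tendsto: "((\<lambda>\<xi>. - g \<xi> / U \<xi>) \<longlongrightarrow> \<gamma> * c - h' 0) (at_left 0)"
proof -
  have "((\<lambda>\<xi>. - \<gamma> * q \<xi> - h (U \<xi>) / U \<xi>) \<longlongrightarrow> - \<gamma> * (- c) - h' 0) (at_left 0)"
    by (intro tendsto_intros q_tendsto h_over_U_tendsto)
  moreover have "\<forall>\<^sub>F \<xi> in at_left 0. - \<gamma> * q \<xi> - h (U \<xi>) / U \<xi> = - g \<xi> / U \<xi>"
    using eventually_at_left_0_neg
  proof eventually_elim
    case (elim \<xi>)
    then show ?case unfolding g_def q_def using U_pos[OF elim] by (simp add: field_simps)
  qed
  ultimately show ?thesis by (simp add: tendsto_cong)
qed

lemma P_tendsto_0: "(P \<longlongrightarrow> 0) (at_left 0)"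
proof -
  have "isCont P 0" using continuous_on_P by (simp add: continuous_on_eq_continuous_at)
  then have "(P \<longlongrightarrow> 0) (at 0)" using P_eq_integral[of 0] by (simp add: isCont_def)
  then show ?thesis by (rule tendsto_within_subset) simp
qed

lemma X_tendsto_0: "(X \<longlongrightarrow> 0) (at_left 0)"
proof -
  have "((\<lambda>\<xi>. U \<xi> powr (\<beta> + 1)) \<longlongrightarrow> 0 powr (\<beta> + 1)) (at_left 0)"
    using \<beta>_pos U_nonneg by (intro tendsto_powr' U_tendsto_0 tendsto_const) auto
  then show ?thesis unfolding X_def by simp
qed

lemma P_over_X_tendsto:
  "((\<lambda>\<xi>. P \<xi> / X \<xi>) \<longlongrightarrow> m * (\<gamma> * c - h' 0) / ((\<beta> + 1) * - (c powr \<alpha>))) (at_left 0)"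
proof (rule lhopital_left[OF P_tendsto_0 X_tendsto_0])
  show "\<forall>\<^sub>F \<xi> in at_left 0. X \<xi> \<noteq> 0"
    using eventually_at_left_0_neg by eventually_elim (simp add: X_def U_pos less_imp_neq[symmetric])
  show "\<forall>\<^sub>F \<xi> in at_left 0. (\<beta> + 1) * U \<xi> * v \<xi> / m \<noteq> 0"
    using eventually_at_left_0_neg eventually_q_neg
  proof eventually_elim
    case (elim \<xi>)
    then show ?case using U_pos[OF elim(1)] \<beta>_pos m_pos by (simp add: v_def)
  qed
  show "\<forall>\<^sub>F \<xi> in at_left 0. (P has_real_derivative - g \<xi>) (at \<xi>)"
    using eventually_at_left_0_neg by eventually_elim (rule has_real_derivative_P)
  show "\<forall>\<^sub>F \<xi> in at_left 0. (X has_real_derivative (\<beta> + 1) * U \<xi> * v \<xi> / m) (at \<xi>)"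
    using eventually_at_left_0_neg by eventually_elim (rule has_real_derivative_X)
  have "((\<lambda>\<xi>. m * (- g \<xi> / U \<xi>) / ((\<beta> + 1) * v \<xi>)) \<longlongrightarrow>
      m * (\<gamma> * c - h' 0) / ((\<beta> + 1) * - (c powr \<alpha>))) (at_left 0)"
    using \<beta>_pos c_pos by (intro tendsto_intros neg_g_over_U_tendsto v_tendsto) auto
  moreover have "\<forall>\<^sub>F \<xi> in at_left 0. m * (- g \<xi> / U \<xi>) / ((\<beta> + 1) * v \<xi>)
      = - g \<xi> / ((\<beta> + 1) * U \<xi> * v \<xi> / m)"
    using eventually_at_left_0_neg
  proof eventually_elim
    case (elim \<xi>)
    then show ?case using U_pos[OF elim] m_pos by (simp add: field_simps)
  qed
  ultimately show "((\<lambda>\<xi>. - g \<xi> / ((\<beta> + 1) * U \<xi> * v \<xi> / m)) \<longlongrightarrow>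
      m * (\<gamma> * c - h' 0) / ((\<beta> + 1) * - (c powr \<alpha>))) (at_left 0)"
    by (rule Lim_transform_eventually)
qed

lemma q'_tendsto: "(q' \<longlongrightarrow> (\<gamma> * c - h' 0) * \<beta> / (\<beta> + 1)) (at_left 0)"
proof -
  have "(q' \<longlongrightarrow> (\<gamma> * c - h' 0)
      - m * (\<gamma> * c - h' 0) / ((\<beta> + 1) * - (c powr \<alpha>)) * - (c powr \<alpha>) / m) (at_left 0)"
  proof -
    have "q' = (\<lambda>\<xi>. - g \<xi> / U \<xi> - P \<xi> / X \<xi> * v \<xi> / m)"
      unfolding q'_def by (simp add: fun_eq_iff mult.commute)
    then show ?thesis
      using m_pos by (simp only:) (intro tendsto_intros neg_g_over_U_tendsto P_over_X_tendsto v_tendsto; simp)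
  qed
  moreover have "B - m * B / ((\<beta> + 1) * - C) * - C / m = B * \<beta> / (\<beta> + 1)" if "C > 0" for B C
  proof -
    have "\<beta> + 1 \<noteq> 0" using \<beta>_pos by simp
    then show ?thesis using m_pos that by (simp add: divide_simps) (simp add: algebra_simps)
  qed
  ultimately show ?thesis using c_pos by simp
qed

definition "v' = (\<lambda>\<xi>. \<alpha> * (- q \<xi>) powr (\<alpha> - 1) * q' \<xi>)"

lemma has_real_derivative_v:
  assumes "\<xi> < 0" "q \<xi> < 0" shows "(v has_real_derivative v' \<xi>) (at \<xi>)"
proof -
  have "((\<lambda>s. - q s) has_real_derivative - q' \<xi>) (at \<xi>)"
    by (intro DERIV_minus has_real_derivative_q assms)
  then have "((\<lambda>s. (- q s) powr \<alpha>) has_real_derivative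
      (- q \<xi>) powr \<alpha> * (0 * ln (- q \<xi>) + - q' \<xi> * \<alpha> / - q \<xi>)) (at \<xi>)"
    by (rule DERIV_powr[OF _ _ DERIV_const]) (use assms in simp)
  then have "(v has_real_derivative
      - ((- q \<xi>) powr \<alpha> * (0 * ln (- q \<xi>) + - q' \<xi> * \<alpha> / - q \<xi>))) (at \<xi>)"
    unfolding v_def by (rule DERIV_minus)
  moreover have "- ((- q \<xi>) powr \<alpha> * (0 * ln (- q \<xi>) + - q' \<xi> * \<alpha> / - q \<xi>)) = v' \<xi>"
    unfolding v'_def using assms(2) by (simp add: powr_diff field_simps)
  ultimately show ?thesis by simp
qed

lemma v'_tendsto:
  "(v' \<longlongrightarrow> \<alpha> * c powr (\<alpha> - 1) * ((\<gamma> * c - h' 0) * \<beta> / (\<beta> + 1))) (at_left 0)"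
proof -
  have "((\<lambda>\<xi>. - q \<xi>) \<longlongrightarrow> c) (at_left 0)"
    using tendsto_minus[OF q_tendsto] by simp
  then show ?thesis
    unfolding v'_def using c_pos by (intro tendsto_intros q'_tendsto) auto
qed

definition "F = (\<lambda>\<xi>. \<bar>deriv V \<xi>\<bar> powr (p - 2) * deriv V \<xi>)"

lemma deriv_V: "\<xi> < 0 \<Longrightarrow> deriv V \<xi> = v \<xi>"
  by (rule DERIV_imp_deriv[OF has_real_derivative_V])

lemma has_real_derivative_deriv_V:
  assumes "\<xi> < 0" "q \<xi> < 0" shows "(deriv V has_real_derivative v' \<xi>) (at \<xi>)"
  by (intro has_field_derivative_transform_within_open[OF has_real_derivative_v[OF assms],
        where S="{..<0}"]) (use assms deriv_V in auto)

lemma has_real_derivative_F: assumes "\<xi> < 0" shows "(F has_real_derivative q' \<xi>) (at \<xi>)"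
  by (intro has_field_derivative_transform_within_open[OF has_real_derivative_q[OF assms],
        where S="{..<0}"]) (use assms in \<open>auto simp: F_def deriv_V flux_v\<close>)

theorem derivative_limits:
  "(\<forall>\<^sub>F \<xi> in at_left 0. V differentiable at \<xi> \<and> deriv V differentiable at \<xi> \<and> F differentiable at \<xi>)
   \<and> (deriv V \<longlongrightarrow> - (c powr \<alpha>)) (at_left 0)
   \<and> (deriv (deriv V) \<longlongrightarrow>
        (\<gamma> * c - h' 0) * (m - \<alpha>) / ((p - 1) * (m - \<alpha> + 1) * c powr (1 - \<alpha>))) (at_left 0)
   \<and> (deriv F \<longlongrightarrow> (\<gamma> * c - h' 0) * (m - \<alpha>) / (m - \<alpha> + 1)) (at_left 0)"
proof (intro conjI)
  show "\<forall>\<^sub>F \<xi> in at_left 0. V differentiable at \<xi> \<and> deriv V differentiable at \<xi> \<and> F differentiable at \<xi>"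
    using eventually_at_left_0_neg eventually_q_neg
    by eventually_elim (meson real_differentiable_def has_real_derivative_V
        has_real_derivative_deriv_V has_real_derivative_F)
  show "(deriv V \<longlongrightarrow> - (c powr \<alpha>)) (at_left 0)"
  proof (rule Lim_transform_eventually[OF v_tendsto])
    show "\<forall>\<^sub>F \<xi> in at_left 0. v \<xi> = deriv V \<xi>"
      using eventually_at_left_0_neg by eventually_elim (simp add: deriv_V)
  qed
  have "\<forall>\<^sub>F \<xi> in at_left 0. v' \<xi> = deriv (deriv V) \<xi>"
    using eventually_at_left_0_neg eventually_q_neg
    by eventually_elim (metis DERIV_imp_deriv has_real_derivative_deriv_V)
  moreover have "\<alpha> * c powr (\<alpha> - 1) * ((\<gamma> * c - h' 0) * \<beta> / (\<beta> + 1))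
      = (\<gamma> * c - h' 0) * (m - \<alpha>) / ((p - 1) * (m - \<alpha> + 1) * c powr (1 - \<alpha>))"
    using alpha_powr_limit_eq[OF c_pos p_gt \<beta>_pos] unfolding \<beta>_def \<alpha>_def .
  ultimately show "(deriv (deriv V) \<longlongrightarrow>
      (\<gamma> * c - h' 0) * (m - \<alpha>) / ((p - 1) * (m - \<alpha> + 1) * c powr (1 - \<alpha>))) (at_left 0)"
    using Lim_transform_eventually[OF v'_tendsto] by simp
  have "\<forall>\<^sub>F \<xi> in at_left 0. q' \<xi> = deriv F \<xi>"
    using eventually_at_left_0_neg by eventually_elim (metis DERIV_imp_deriv has_real_derivative_F)
  then show "(deriv F \<longlongrightarrow> (\<gamma> * c - h' 0) * (m - \<alpha>) / (m - \<alpha> + 1)) (at_left 0)"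
    using Lim_transform_eventually[OF q'_tendsto] unfolding \<beta>_def by simp
qed

end

theorem mainTheorem11:
  fixes m p a \<gamma>s \<gamma> :: real and h h' cf U :: "real \<Rightarrow> real"
  assumes m_pos: "m > 0" and p_gt: "p > 1" and mp: "m * (p - 1) > 1"
    and h_deriv: "\<forall>x\<ge>0. (h has_real_derivative h' x) (at x within {0..})"
    and h'_cont: "continuous_on {0..} h'"
    and h0: "h 0 = 0"
    and a_range: "0 \<le> a" "a < 1"
    and h_neg_a: "\<forall>u\<in>{0..a}. h u \<le> 0"
    and h_pos: "\<forall>u. a < u \<and> u < 1 \<longrightarrow> h u > 0"
    and h_neg1: "\<forall>u>1. h u < 0"
    and h'1: "h' 1 < 0"
    and h_int: "a > 0 \<longrightarrow> integral {0..1} (\<lambda>u. h u * u powr (m - 1)) > 0"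
    and \<gamma>s_pos: "\<gamma>s > 0"
    and cf_speed: "\<forall>g\<in>{0..<\<gamma>s}. cf g > 0 \<and> (\<exists>W. finite_wavefront m p h g (cf g) W)
                     \<and> (\<forall>c W. finite_wavefront m p h g c W \<longrightarrow> c = cf g)"
    and \<gamma>_range: "0 \<le> \<gamma>" "\<gamma> < \<gamma>s"
    and U_front: "finite_wavefront m p h \<gamma> (cf \<gamma>) U"
    and U_supp: "\<forall>\<xi>. U \<xi> > 0 \<longleftrightarrow> \<xi> < 0"
  shows "let \<alpha> = alpha p; c = cf \<gamma>;
             V = (\<lambda>\<xi>. m / (m - \<alpha>) * U \<xi> powr (m - \<alpha>));
             F = (\<lambda>\<xi>. \<bar>deriv V \<xi>\<bar> powr (p - 2) * deriv V \<xi>)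
         in (\<forall>\<^sub>F \<xi> in at_left 0. V differentiable at \<xi> \<and> deriv V differentiable at \<xi>
                                   \<and> F differentiable at \<xi>)
          \<and> (deriv V \<longlongrightarrow> - (c powr \<alpha>)) (at_left 0)
          \<and> (deriv (deriv V) \<longlongrightarrow>
               (\<gamma> * c - h' 0) * (m - \<alpha>) / ((p - 1) * (m - \<alpha> + 1) * c powr (1 - \<alpha>))) (at_left 0)
          \<and> (deriv F \<longlongrightarrow> (\<gamma> * c - h' 0) * (m - \<alpha>) / (m - \<alpha> + 1)) (at_left 0)"
proof -
  have c_pos: "cf \<gamma> > 0" using cf_speed \<gamma>_range by auto
  have tw: "tw_solution m p h \<gamma> (cf \<gamma>) U" and U_cont: "continuous_on UNIV U"
    and U_antimono: "antimono U" and "\<exists>\<xi>0. \<forall>\<xi>\<ge>\<xi>0. U \<xi> = 0"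
    using U_front unfolding finite_wavefront_def by auto
  then obtain \<xi>0 where \<xi>0: "\<And>\<xi>. \<xi> \<ge> \<xi>0 \<Longrightarrow> U \<xi> = 0" by blast
  have U_zero: "U \<xi> = 0" if "\<xi> \<ge> 0" for \<xi>
    using U_antimono[THEN antimonoD, of \<xi> "max \<xi> \<xi>0"] \<xi>0[of "max \<xi> \<xi>0"] U_supp that
    by (metis linorder_not_le max.cobounded1 max.cobounded2 order_antisym_conv)
  interpret front: finite_front m p \<gamma> "cf \<gamma>" h h' U
    using m_pos p_gt mp h_deriv h0 c_pos \<gamma>_range tw U_cont U_antimono U_supp U_zero
    by unfold_locales auto
  show ?thesis
    using front.derivative_limits unfolding Let_def front.F_def front.V_def front.\<alpha>_def .
qed

end
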